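(* Let $n\geq2$, and let $f,g:[0,\infty)\to[0,\infty)$ be continuous, log-concave functions, $C^2$-smooth on $(0,\infty)$, such that $f(0)>0$, $g(0)>0$ and $\int f<\infty$, $\int g<\infty$. Assume that for any $t\geq0$, $$ |f(t)-g(t)|\leq e^{-5n}\min\{f(0),g(0)\}. $$ Then $(1-e^{-n})t_n(g)\leq t_n(f)\leq(1+e^{-n})t_n(g)$.
   Context: For a continuous log-concave function $h:[0,\infty)\to[0,\infty)$, $C^2$-smooth on $(0,\infty)$, with $0<\int_0^\infty h<\infty$, and for $p>1$, $t_p(h)$ denotes the unique $t>0$ such that $h(t)>0$ and $h'(t)/h(t)=-(p-1)/t$ (under these assumptions such $t$ exists and is unique). A function $h\ge 0$ is log-concave if $h(\lambda x+(1-\lambda)y)\geq h(x)^\lambda h(y)^{1-\lambda}$. *)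

theory Defs
  imports "HOL-Analysis.Analysis"
begin

definition log_concave_on_nonneg :: "(real \<Rightarrow> real) \<Rightarrow> bool" where
  "log_concave_on_nonneg h \<longleftrightarrow>
     (\<forall>x\<ge>0. \<forall>y\<ge>0. \<forall>l\<in>{0..1}.
        h (l * x + (1 - l) * y) \<ge> h x powr l * h y powr (1 - l))"

definition C2_on_pos :: "(real \<Rightarrow> real) \<Rightarrow> bool" where
  "C2_on_pos h \<longleftrightarrow>
     (\<exists>h' h''. (\<forall>x>0. (h has_real_derivative h' x) (at x) \<and>
                        (h' has_real_derivative h'' x) (at x)) \<and>
               continuous_on {0<..} h'')"

definition t_p :: "real \<Rightarrow> (real \<Rightarrow> real) \<Rightarrow> real" where
  "t_p p h = (THE t. t > 0 \<and> h t > 0 \<and> deriv h t / h t = - (p - 1) / t)"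

end

theory Submission
  imports Defs
begin

text \<open>
  If \<open>a = t_p(h)\<close>, the tangent line of the concave function \<open>log h\<close> at \<open>a\<close> gives
  \<open>h(t) \<le> h(a) e\<^bsup>c(1 - t/a)\<^esup>\<close> with \<open>c = p - 1\<close>; hence \<open>a\<close> maximises \<open>t\<^sup>c h(t)\<close>, quantitatively
  \<open>t\<^sup>c h(t) \<le> (x e\<^bsup>1-x\<^esup>)\<^sup>c a\<^sup>c h(a)\<close> for \<open>x = t/a\<close>, and at \<open>t = 0\<close> it gives \<open>h(0) \<le> e\<^sup>c h(a)\<close>.
  The latter makes the perturbation at most \<open>\<eta> = e\<^bsup>-4p-1\<^esup>\<close> relative to \<open>f(t_p f)\<close> and
  \<open>g(t_p g)\<close>, and comparing the maxima of \<open>t\<^sup>c f\<close> and \<open>t\<^sup>c g\<close> yields \<open>y e\<^bsup>1-y\<^esup> \<ge> (1 - \<eta>)\<^sup>2\<close>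
  for \<open>y = t_p f / t_p g\<close>. Since \<open>y e\<^bsup>1-y\<^esup> \<le> 4y/(1+y)\<^sup>2\<close>, this forces
  \<open>\<bar>y - 1\<bar> \<le> sqrt (18 \<eta>) \<le> e\<^bsup>-p\<^esup>\<close>.

  That \<open>t_p\<close> is well defined: \<open>(log h)' + c/t\<close> is positive near \<open>0\<close>, and it must become
  nonpositive somewhere because otherwise \<open>h\<close> would stay bounded below and not be integrable;
  uniqueness holds since \<open>(log h)'\<close> is nonincreasing.
\<close>


lemma DERIV_ge_of_chord_bound:
  fixes q :: "real \<Rightarrow> real"
  assumes dq: "(q has_real_derivative E) (at 0)"
    and chord: "\<And>l. 0 < l \<Longrightarrow> l \<le> 1 \<Longrightarrow> l * K \<le> q l - q 0"
  shows "K \<le> E"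
proof -
  have "((\<lambda>y. (q y - q 0) / (y - 0)) \<longlongrightarrow> E) (at 0)"
    using dq by (simp add: has_field_derivative_iff)
  then have lim: "((\<lambda>y. (q y - q 0) / y) \<longlongrightarrow> E) (at_right 0)"
    by (simp add: filterlim_at_split)
  have "eventually (\<lambda>y. K \<le> (q y - q 0) / y) (at_right (0::real))"
    unfolding eventually_at_right[OF zero_less_one]
    using chord by (auto intro!: exI[of _ 1] simp: pos_le_divide_eq mult.commute)
  then show ?thesis
    using tendsto_lowerbound[OF lim] by simp
qed

lemma log_concave_le_tangent:
  assumes lc: "log_concave_on_nonneg h" and dh: "(h has_real_derivative D) (at a)"
    and a: "a \<ge> 0" and ha: "h a > 0" and t: "t \<ge> 0"
  shows "h t \<le> h a * exp (D / h a * (t - a))"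
proof (cases "h t > 0")
  case False
  moreover have "0 < h a * exp (D / h a * (t - a))"
    using ha by simp
  ultimately show ?thesis
    by linarith
next
  case ht: True
  define q where "q l = ln (h (a + l * (t - a)))" for l
  have "((\<lambda>l. a + l * (t - a)) has_real_derivative t - a) (at 0)"
    by (auto intro!: derivative_eq_intros)
  then have "((\<lambda>l. h (a + l * (t - a))) has_real_derivative D * (t - a)) (at 0)"
    using DERIV_chain2[of h D] dh by fastforce
  then have dq: "(q has_real_derivative D / h a * (t - a)) (at 0)"
    unfolding q_def using ha by (auto intro!: derivative_eq_intros)
  have "l * (ln (h t) - ln (h a)) \<le> q l - q 0" if "0 < l" "l \<le> 1" for l
  proof -
    have "h t powr l * h a powr (1 - l) \<le> h (l * t + (1 - l) * a)"
      using lc t a that unfolding log_concave_on_nonneg_def by auto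
    moreover have "h t powr l * h a powr (1 - l) > 0"
      using ht ha by simp
    ultimately have "ln (h t powr l * h a powr (1 - l)) \<le> ln (h (l * t + (1 - l) * a))"
      by simp
    moreover have "ln (h t powr l * h a powr (1 - l)) = l * ln (h t) + (1 - l) * ln (h a)"
      using ht ha by (simp add: ln_mult ln_powr)
    moreover have "a + l * (t - a) = l * t + (1 - l) * a"
      by algebra
    ultimately show ?thesis
      unfolding q_def by (simp add: algebra_simps)
  qed
  then have "ln (h t) - ln (h a) \<le> D / h a * (t - a)"
    by (rule DERIV_ge_of_chord_bound[OF dq])
  then have "exp (ln (h t)) \<le> exp (ln (h a) + D / h a * (t - a))"
    by simp
  then show ?thesis
    using ht ha by (simp add: exp_add)
qed

lemma C2_on_pos_deriv:
  assumes "C2_on_pos h"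
  shows C2_on_pos_has_deriv: "\<And>x. x > 0 \<Longrightarrow> (h has_real_derivative deriv h x) (at x)"
    and C2_on_pos_continuous_deriv: "continuous_on {0<..} (deriv h)"
proof -
  obtain h' h'' where d: "\<forall>x>0. (h has_real_derivative h' x) (at x) \<and>
      (h' has_real_derivative h'' x) (at x)"
    using assms unfolding C2_on_pos_def by blast
  have eq: "deriv h x = h' x" if "x > 0" for x
    using d that DERIV_imp_deriv by blast
  show "(h has_real_derivative deriv h x) (at x)" if "x > 0" for x
    using d that eq by simp
  have "continuous_on {0<..} h'"
    by (rule continuous_at_imp_continuous_on) (use d DERIV_isCont in auto)
  then show "continuous_on {0<..} (deriv h)"
    by (rule continuous_on_cong[THEN iffD1, rotated 2]) (auto simp: eq)
qed

lemma log_concave_ln_le_tangent: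
  assumes lc: "log_concave_on_nonneg h" and C2: "C2_on_pos h"
    and a: "a > 0" and ha: "h a > 0" and t: "t \<ge> 0" and ht: "h t > 0"
  shows "ln (h t) \<le> ln (h a) + deriv h a / h a * (t - a)"
proof -
  have "h t \<le> h a * exp (deriv h a / h a * (t - a))"
    using log_concave_le_tangent[OF lc C2_on_pos_has_deriv[OF C2 a]] a ha t by simp
  then have "ln (h t) \<le> ln (h a * exp (deriv h a / h a * (t - a)))"
    using ht by simp
  also have "\<dots> = ln (h a) + deriv h a / h a * (t - a)"
    using ha by (simp add: ln_mult)
  finally show ?thesis .
qed

lemma log_concave_logderiv_antimono:
  assumes lc: "log_concave_on_nonneg h" and C2: "C2_on_pos h"
    and a: "a > 0" "a \<le> b" and ha: "h a > 0" and hb: "h b > 0"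
  shows "deriv h b / h b \<le> deriv h a / h a"
proof (cases "a = b")
  case False
  have "ln (h b) \<le> ln (h a) + deriv h a / h a * (b - a)"
    using log_concave_ln_le_tangent[OF lc C2 a(1) ha _ hb] a by simp
  moreover have "ln (h a) \<le> ln (h b) + deriv h b / h b * (a - b)"
    using log_concave_ln_le_tangent[OF lc C2 _ hb _ ha] a by simp
  ultimately have "0 \<le> (deriv h a / h a - deriv h b / h b) * (b - a)"
    by (simp only: algebra_simps)
  then show ?thesis
    using a False by (simp add: zero_le_mult_iff)
qed simp

lemma log_concave_pos_between:
  assumes lc: "log_concave_on_nonneg h" and "0 \<le> x" "x \<le> z" "z \<le> y"
    and hx: "h x > 0" and hy: "h y > 0"
  shows "h z > 0"
proof (cases "x = y")
  case False
  define l where "l = (y - z) / (y - x)"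
  have l: "0 \<le> l" "l \<le> 1"
    using assms False by (auto simp: l_def divide_le_eq)
  have "l * (y - x) = y - z"
    using False by (simp add: l_def)
  then have "z = l * x + (1 - l) * y"
    by (simp add: algebra_simps)
  moreover have "h x powr l * h y powr (1 - l) \<le> h (l * x + (1 - l) * y)"
    using lc assms l unfolding log_concave_on_nonneg_def by auto
  moreover have "0 < h x powr l * h y powr (1 - l)"
    using hx hy by simp
  ultimately show ?thesis
    by (metis order.strict_trans2)
qed (use assms in simp)

text \<open>By the intermediate value theorem, \<open>h\<close> cannot drop below \<open>m\<close> without passing through \<open>m/2 > 0\<close>.\<close>

lemma continuous_ge_if_ge_where_pos:
  fixes h :: "real \<Rightarrow> real"
  assumes c: "continuous_on {s..} h" and m: "m > 0" "m \<le> h s"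
    and pos_ge: "\<And>t. t \<ge> s \<Longrightarrow> h t > 0 \<Longrightarrow> m \<le> h t"
    and t: "t \<ge> s"
  shows "m \<le> h t"
proof (rule ccontr)
  assume "\<not> m \<le> h t"
  then have "h t \<le> m / 2"
    using pos_ge[OF t] m by force
  moreover have "continuous_on {s..t} h"
    by (rule continuous_on_subset[OF c]) auto
  ultimately obtain x where "s \<le> x" "x \<le> t" "h x = m / 2"
    using IVT2'[of h t "m/2" s] m t by auto
  then show False
    using pos_ge[of x] m by auto
qed

lemma nonneg_integrable_not_bounded_below:
  fixes h :: "real \<Rightarrow> real"
  assumes i: "h integrable_on {0..}" and c: "continuous_on {0..} h"
    and nn: "\<And>t. t \<ge> 0 \<Longrightarrow> h t \<ge> 0" and s: "s \<ge> 0" and m: "m > 0"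
    and ge: "\<And>t. t \<ge> s \<Longrightarrow> m \<le> h t"
  shows False
proof -
  define k where "k = s + (\<bar>integral {0..} h\<bar> + 1) / m"
  have sk: "s \<le> k"
    using m by (simp add: k_def)
  have i': "h integrable_on {s..k}"
    using s by (intro integrable_continuous_interval continuous_on_subset[OF c]) auto
  have "(k - s) * m \<le> integral {s..k} h"
    using integral_le[of "\<lambda>_. m" "{s..k}" h] i' ge sk by auto
  also have "\<dots> \<le> integral {0..} h"
    by (rule integral_subset_le) (use i' i s nn in auto)
  finally show False
    using m by (simp add: k_def)
qed

text \<open>As \<open>(log h)'\<close> is nonincreasing, \<open>t (log h)'(t) \<ge> t (log h)'(s)\<close> for \<open>t \<le> s\<close>, which tends to \<open>0\<close>.\<close>

lemma log_concave_logderiv_gt_near_zero: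
  assumes c: "c > 0" and cont: "continuous_on {0..} h" and h0: "h 0 > 0"
    and lc: "log_concave_on_nonneg h" and C2: "C2_on_pos h"
  shows "\<exists>t>0. h t > 0 \<and> - c / t < deriv h t / h t"
proof -
  have "(h \<longlongrightarrow> h 0) (at 0 within {0..})"
    using cont by (meson atLeast_iff continuous_on_def order_refl)
  then have "(h \<longlongrightarrow> h 0) (at_right 0)"
    by (rule tendsto_within_subset) auto
  then have "eventually (\<lambda>x. h x > 0) (at_right 0)"
    using h0 by (rule order_tendstoD)
  then obtain r where r: "r > 0" "\<And>x. 0 < x \<Longrightarrow> x < r \<Longrightarrow> h x > 0"
    unfolding eventually_at_right_field by blast
  define s where "s = r / 2"
  define \<psi> where "\<psi> x = deriv h x / h x" for x
  define t where "t = min s (c / (2 * (\<bar>\<psi> s\<bar> + 1)))"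
  have s: "s > 0" "h s > 0"
    using r by (auto simp: s_def)
  have "t > 0" "t \<le> s"
    using s c by (auto simp: t_def)
  then have t: "t > 0" "t \<le> s" "h t > 0"
    using r by (auto simp: s_def)
  have "t \<le> c / (2 * (\<bar>\<psi> s\<bar> + 1))"
    by (simp add: t_def)
  then have "t * (2 * (\<bar>\<psi> s\<bar> + 1)) \<le> c"
    by (simp add: pos_le_divide_eq)
  moreover have "t * (2 * (\<bar>\<psi> s\<bar> + 1)) = 2 * (t * \<bar>\<psi> s\<bar>) + 2 * t"
    by (simp add: algebra_simps)
  moreover have "0 \<le> t * \<bar>\<psi> s\<bar>"
    using t by simp
  ultimately have "t * \<bar>\<psi> s\<bar> < c"
    using t by linarith
  moreover have "- (t * \<bar>\<psi> s\<bar>) \<le> t * \<psi> s"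
    using mult_left_mono[of "- \<bar>\<psi> s\<bar>" "\<psi> s" t] t by simp
  moreover have "\<psi> s \<le> \<psi> t"
    unfolding \<psi>_def by (rule log_concave_logderiv_antimono[OF lc C2 t(1,2) t(3) s(2)])
  then have "t * \<psi> s \<le> t * \<psi> t"
    using t by (simp add: mult_left_mono)
  ultimately have "- c < t * \<psi> t"
    by linarith
  then have "- c / t < \<psi> t"
    using t(1) by (simp add: field_simps)
  then show ?thesis
    using t unfolding \<psi>_def by blast
qed

lemma log_concave_integrable_logderiv_le_far:
  assumes c: "c > 0" and cont: "continuous_on {0..} h" and nn: "\<forall>t\<ge>0. h t \<ge> 0"
    and lc: "log_concave_on_nonneg h" and C2: "C2_on_pos h" and i: "h integrable_on {0..}"
    and t0: "t0 > 0" "h t0 > 0"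
  shows "\<exists>t>t0. h t > 0 \<and> deriv h t / h t \<le> - c / t"
proof (rule ccontr)
  assume far: "\<not> ?thesis"
  define m where "m = h t0 / exp c"
  have m: "m > 0" "m \<le> h t0"
    using t0 c by (auto simp: m_def divide_le_eq)
  have "m \<le> h t" if t: "t \<ge> t0" "h t > 0" for t
  proof (cases "t = t0")
    case False
    then have tt: "t > t0" "- c / t < deriv h t / h t"
      using t far by auto
    then have "deriv h t / h t * (t0 - t) \<le> (- c / t) * (t0 - t)"
      by (intro mult_right_mono_neg) auto
    also have "\<dots> \<le> c"
      using tt t0 c by (simp add: field_simps)
    finally have "ln (h t0) \<le> ln (h t) + c"
      using log_concave_ln_le_tangent[OF lc C2 _ t(2) _ t0(2)] tt t0 by simp
    then have "h t0 \<le> h t * exp c"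
      using t0 t by (metis exp_add exp_le_cancel_iff exp_ln)
    then show ?thesis
      by (simp add: m_def divide_le_eq)
  qed (use m in simp)
  then have "\<And>t. t \<ge> t0 \<Longrightarrow> m \<le> h t"
    using continuous_ge_if_ge_where_pos[OF continuous_on_subset[OF cont] m] t0 by auto
  then show False
    using nonneg_integrable_not_bounded_below[OF i cont _ _ m(1), of t0] nn t0 by auto
qed

lemma t_p_equation_solvable:
  fixes h :: "real \<Rightarrow> real" and p :: real
  assumes p: "p > 1" and cont: "continuous_on {0..} h" and nn: "\<forall>t\<ge>0. h t \<ge> 0"
    and lc: "log_concave_on_nonneg h" and C2: "C2_on_pos h" and h0: "h 0 > 0"
    and i: "h integrable_on {0..}"
  shows "\<exists>t>0. h t > 0 \<and> deriv h t / h t = - (p - 1) / t"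
proof -
  define F where "F x = deriv h x / h x + (p - 1) / x" for x
  obtain t0 where t0: "t0 > 0" "h t0 > 0" "- (p - 1) / t0 < deriv h t0 / h t0"
    using log_concave_logderiv_gt_near_zero[OF _ cont h0 lc C2, of "p - 1"] p by auto
  obtain t1 where t1: "t1 > t0" "h t1 > 0" "deriv h t1 / h t1 \<le> - (p - 1) / t1"
    using log_concave_integrable_logderiv_le_far[OF _ cont nn lc C2 i t0(1,2), of "p - 1"] p
    by auto
  have "F t0 > 0" "F t1 \<le> 0"
    using t0(3) t1(3) unfolding F_def by argo+
  have pos: "h x > 0" if "t0 \<le> x" "x \<le> t1" for x
    using log_concave_pos_between[OF lc _ that t0(2) t1(2)] t0 by simp
  have "continuous_on {t0..t1} F"
    unfolding F_def using t0 pos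
    by (intro continuous_intros continuous_on_subset[OF cont]
        continuous_on_subset[OF C2_on_pos_continuous_deriv[OF C2]]) force+
  then obtain x where x: "t0 \<le> x" "x \<le> t1" "F x = 0"
    using IVT2'[of F t1 0 t0] \<open>F t0 > 0\<close> \<open>F t1 \<le> 0\<close> t1 by auto
  then show ?thesis
    using t0 pos[OF x(1,2)] by (intro exI[of _ x]) (auto simp: F_def field_simps)
qed

lemma t_p_spec:
  fixes h :: "real \<Rightarrow> real" and p :: real
  assumes p: "p > 1" and "continuous_on {0..} h" and "\<forall>t\<ge>0. h t \<ge> 0"
    and lc: "log_concave_on_nonneg h" and C2: "C2_on_pos h" and "h 0 > 0"
    and "h integrable_on {0..}"
  shows "t_p p h > 0 \<and> h (t_p p h) > 0 \<and> deriv h (t_p p h) / h (t_p p h) = - (p - 1) / t_p p h"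
  unfolding t_p_def
proof (rule theI')
  have le: "b \<le> a" if a: "a > 0" "h a > 0" "deriv h a / h a = - (p - 1) / a"
    and b: "b > 0" "h b > 0" "deriv h b / h b = - (p - 1) / b" for a b
  proof (rule ccontr)
    assume "\<not> b \<le> a"
    then have "- (p - 1) / b \<le> - (p - 1) / a"
      using log_concave_logderiv_antimono[OF lc C2 a(1) _ a(2) b(2)] a b by simp
    then have "(p - 1) / a \<le> (p - 1) / b"
      by argo
    then show False
      using \<open>\<not> b \<le> a\<close> divide_strict_left_mono[of a b "p - 1"] a b p by auto
  qed
  show "\<exists>!t. t > 0 \<and> h t > 0 \<and> deriv h t / h t = - (p - 1) / t"
    using t_p_equation_solvable[OF assms] le by (metis order_antisym)
qed

lemma log_concave_le_exp_at_t_p_point: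
  assumes lc: "log_concave_on_nonneg h" and C2: "C2_on_pos h"
    and a: "a > 0" and ha: "h a > 0" and crit: "deriv h a / h a = - c / a" and t: "t \<ge> 0"
  shows "h t \<le> h a * exp (c * (1 - t / a))"
proof -
  have "h t \<le> h a * exp (deriv h a / h a * (t - a))"
    using log_concave_le_tangent[OF lc C2_on_pos_has_deriv[OF C2 a]] a ha t by simp
  also have "deriv h a / h a * (t - a) = c * (1 - t / a)"
    using a unfolding crit by (simp add: field_simps)
  finally show ?thesis .
qed

lemma mult_exp_one_minus_le_one: "x * exp (1 - x) \<le> (1::real)"
proof -
  have "x \<le> exp (x - 1)"
    using exp_ge_add_one_self[of "x - 1"] by simp
  then show ?thesis
    by (simp add: exp_diff field_simps)
qed

lemma powr_mult_le_of_exp_bound: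
  fixes h :: "real \<Rightarrow> real"
  assumes a: "a > 0" and t: "t \<ge> 0" and bound: "h t \<le> h a * exp (c * (1 - t / a))"
  shows "t powr c * h t \<le> (t / a * exp (1 - t / a)) powr c * (a powr c * h a)"
proof -
  have tc: "t powr c = (t / a) powr c * a powr c"
    using a by (simp flip: powr_mult)
  have ec: "exp (c * (1 - t / a)) = exp (1 - t / a) powr c"
    by (simp add: exp_powr_real mult.commute)
  have "t powr c * h t \<le> t powr c * (h a * exp (c * (1 - t / a)))"
    using bound by (simp add: mult_left_mono)
  also have "\<dots> = ((t / a) powr c * exp (1 - t / a) powr c) * (a powr c * h a)"
    unfolding tc ec by (simp only: mult_ac)
  also have "(t / a) powr c * exp (1 - t / a) powr c = (t / a * exp (1 - t / a)) powr c"
    by (rule powr_mult[symmetric])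
  finally show ?thesis .
qed

text \<open>\<open>Tf\<close> makes \<open>a\<close> a maximiser of \<open>t\<^sup>c f(t)\<close>, while \<open>Tg\<close> bounds how far \<open>a\<close> is from maximising
  \<open>t\<^sup>c g(t)\<close>: \<open>b\<^sup>c g(b) (1-\<eta>)\<^sup>2 \<le> b\<^sup>c f(b) (1-\<eta>) \<le> a\<^sup>c f(a) (1-\<eta>) \<le> a\<^sup>c g(a) \<le> (y e\<^bsup>1-y\<^esup>)\<^sup>c b\<^sup>c g(b)\<close>
  with \<open>y = a/b\<close>.\<close>

lemma ratio_bound_of_exp_bounds:
  fixes f g :: "real \<Rightarrow> real"
  assumes c: "c \<ge> 0" and a: "a > 0" and b: "b > 0" and fa: "f a \<ge> 0" and gb: "g b > 0"
    and Tf: "f b \<le> f a * exp (c * (1 - b / a))"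
    and Tg: "g a \<le> g b * exp (c * (1 - a / b))"
    and gf: "g b * (1 - \<eta>) \<le> f b" and fg: "f a * (1 - \<eta>) \<le> g a" and \<eta>: "\<eta> \<le> 1"
  shows "(1 - \<eta>)\<^sup>2 \<le> (a / b * exp (1 - a / b)) powr c"
proof -
  have "(b / a * exp (1 - b / a)) powr c \<le> 1"
    using c a b mult_exp_one_minus_le_one[of "b / a"] by (intro powr_le1) auto
  then have f_max: "b powr c * f b \<le> a powr c * f a"
    using powr_mult_le_of_exp_bound[OF a _ Tf] b fa
    by (smt (verit) mult_left_le_one_le powr_ge_zero zero_le_mult_iff)
  have "(b powr c * g b) * (1 - \<eta>)\<^sup>2 = b powr c * (g b * (1 - \<eta>)) * (1 - \<eta>)"
    by (simp add: power2_eq_square)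
  also have "\<dots> \<le> b powr c * f b * (1 - \<eta>)"
    using gf \<eta> by (intro mult_right_mono mult_left_mono) auto
  also have "\<dots> \<le> a powr c * (f a * (1 - \<eta>))"
    using mult_right_mono[OF f_max, of "1 - \<eta>"] \<eta> by (simp add: mult.assoc)
  also have "\<dots> \<le> a powr c * g a"
    using fg by (simp add: mult_left_mono)
  also have "\<dots> \<le> (a / b * exp (1 - a / b)) powr c * (b powr c * g b)"
    using powr_mult_le_of_exp_bound[OF b _ Tg] a by simp
  finally show ?thesis
    using b gb by (simp add: mult.commute)
qed

lemma mult_exp_one_minus_le_div_sq:
  fixes y :: real
  assumes y: "y \<ge> 0"
  shows "y * exp (1 - y) \<le> 4 * y / (1 + y)\<^sup>2"
proof -
  have "(1 + y) / 2 \<le> exp ((y - 1) / 2)"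
    using exp_ge_add_one_self[of "(y - 1) / 2"] by argo
  then have "((1 + y) / 2)\<^sup>2 \<le> (exp ((y - 1) / 2))\<^sup>2"
    using y by (intro power_mono) auto
  also have "\<dots> = exp (y - 1)"
    by (simp add: power2_eq_square flip: exp_add)
  finally have sq: "((1 + y) / 2)\<^sup>2 \<le> exp (y - 1)" .
  have "y * exp (1 - y) = y / exp (y - 1)"
    by (simp add: exp_diff)
  also have "\<dots> \<le> y / ((1 + y) / 2)\<^sup>2"
    using sq y by (intro divide_left_mono) auto
  also have "\<dots> = 4 * y / (1 + y)\<^sup>2"
    by (simp add: power_divide)
  finally show ?thesis .
qed

lemma sq_diff_one_le_if_mult_exp_ge:
  fixes y e :: real
  assumes y: "y \<ge> 0" and e: "0 \<le> e" "e \<le> 1/100" and ge: "1 - 2 * e \<le> y * exp (1 - y)"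
  shows "(y - 1)\<^sup>2 \<le> 18 * e"
proof -
  have "(1 - 2 * e) * (1 + y)\<^sup>2 \<le> y * exp (1 - y) * (1 + y)\<^sup>2"
    using ge by (simp add: mult_right_mono)
  also have "\<dots> \<le> 4 * y"
    using mult_exp_one_minus_le_div_sq[OF y] y by (simp add: pos_le_divide_eq add_pos_nonneg)
  finally have "(1 - 2 * e) * (1 + y)\<^sup>2 \<le> 4 * y" .
  then have close: "(y - 1)\<^sup>2 \<le> 2 * e * (1 + y)\<^sup>2"
    by (simp add: power2_eq_square algebra_simps)
  have "y \<le> 2"
  proof (rule ccontr)
    assume "\<not> y \<le> 2"
    then have "(1 + y)\<^sup>2 \<le> (3 * (y - 1))\<^sup>2"
      using y by (intro power_mono) auto
    then have "(y - 1)\<^sup>2 \<le> 2 * e * (3 * (y - 1))\<^sup>2"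
      using close e by (meson mult_left_mono order.trans zero_le_mult_iff zero_le_numeral)
    also have "\<dots> = 18 * e * (y - 1)\<^sup>2"
      by (simp add: power2_eq_square algebra_simps)
    also have "\<dots> \<le> 18 / 100 * (y - 1)\<^sup>2"
      using e by (intro mult_right_mono) auto
    finally have "(y - 1)\<^sup>2 \<le> 0"
      by simp
    then show False
      using \<open>\<not> y \<le> 2\<close> by simp
  qed
  then have "(1 + y)\<^sup>2 \<le> 3\<^sup>2"
    using y by (intro power_mono) auto
  then have "2 * e * (1 + y)\<^sup>2 \<le> 2 * e * 3\<^sup>2"
    using e by (intro mult_left_mono) auto
  then show ?thesis
    using close by simp
qed

lemma exp_minus_4p_minus_1_bounds:
  fixes p :: real
  assumes p: "p \<ge> 2"
  shows "exp (- 4 * p - 1) \<le> 1 / 100" and "18 * exp (- 4 * p - 1) \<le> (exp (- p))\<^sup>2"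
proof -
  have "(3::real)\<^sup>2 \<le> (1 + p)\<^sup>2"
    using p by (intro power_mono) auto
  also have "\<dots> \<le> (exp p)\<^sup>2"
    using p by (intro power_mono exp_ge_add_one_self) auto
  also have "\<dots> = exp (2 * p)"
    by (simp add: power2_eq_square flip: exp_add)
  finally have e2p: "9 \<le> exp (2 * p)"
    by simp
  moreover have "2 \<le> exp (1::real)"
    using exp_ge_add_one_self[of 1] by simp
  ultimately have "9 * 2 \<le> exp (2 * p) * exp 1"
    by (intro mult_mono) auto
  then have "18 * exp (- 4 * p - 1) \<le> exp (2 * p) * exp 1 * exp (- 4 * p - 1)"
    by simp
  also have "\<dots> = (exp (- p))\<^sup>2"
    by (simp add: power2_eq_square flip: exp_add)
  finally show sq: "18 * exp (- 4 * p - 1) \<le> (exp (- p))\<^sup>2" .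
  have "(exp (- p))\<^sup>2 = exp (- (2 * p))"
    by (simp add: power2_eq_square flip: exp_add)
  also have "\<dots> \<le> 1 / 9"
    using e2p by (simp add: exp_minus inverse_eq_divide)
  finally have "(exp (- p))\<^sup>2 \<le> 1 / 9" .
  then show "exp (- 4 * p - 1) \<le> 1 / 100"
    using sq by simp
qed

theorem t_p_stable:
  fixes p :: real and f g :: "real \<Rightarrow> real"
  assumes p: "p \<ge> 2"
    and f: "continuous_on {0..} f" "\<forall>t\<ge>0. f t \<ge> 0" "log_concave_on_nonneg f"
      "C2_on_pos f" "f 0 > 0" "f integrable_on {0..}"
    and g: "continuous_on {0..} g" "\<forall>t\<ge>0. g t \<ge> 0" "log_concave_on_nonneg g"
      "C2_on_pos g" "g 0 > 0" "g integrable_on {0..}"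
    and close: "\<forall>t\<ge>0. \<bar>f t - g t\<bar> \<le> exp (- 5 * p) * min (f 0) (g 0)"
  shows "(1 - exp (- p)) * t_p p g \<le> t_p p f \<and> t_p p f \<le> (1 + exp (- p)) * t_p p g"
proof -
  define a b \<eta> where "a = t_p p f" and "b = t_p p g" and "\<eta> = exp (- 4 * p - 1)"
  have a: "a > 0" "f a > 0" "deriv f a / f a = - (p - 1) / a"
    using t_p_spec[OF _ f] p unfolding a_def by auto
  have b: "b > 0" "g b > 0" "deriv g b / g b = - (p - 1) / b"
    using t_p_spec[OF _ g] p unfolding b_def by auto
  have Tf: "\<And>t. t \<ge> 0 \<Longrightarrow> f t \<le> f a * exp ((p - 1) * (1 - t / a))"
    using log_concave_le_exp_at_t_p_point[OF f(3,4) a] by blast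
  have Tg: "\<And>t. t \<ge> 0 \<Longrightarrow> g t \<le> g b * exp ((p - 1) * (1 - t / b))"
    using log_concave_le_exp_at_t_p_point[OF g(3,4) b] by blast
  have close_scaled: "\<bar>f t - g t\<bar> \<le> \<eta> * v"
    if "t \<ge> 0" "min (f 0) (g 0) \<le> v * exp (p - 1)" for t v
  proof -
    have "\<bar>f t - g t\<bar> \<le> exp (- 5 * p) * min (f 0) (g 0)"
      using close that(1) by blast
    also have "\<dots> \<le> exp (- 5 * p) * (v * exp (p - 1))"
      using that(2) by (intro mult_left_mono) auto
    also have "\<dots> = \<eta> * v"
      by (simp add: \<eta>_def mult_ac flip: exp_add)
    finally show ?thesis .
  qed
  have gf: "g b * (1 - \<eta>) \<le> f b"
    using close_scaled[of b "g b"] Tg[of 0] b(1) by (simp add: algebra_simps abs_le_iff)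
  have fg: "f a * (1 - \<eta>) \<le> g a"
    using close_scaled[of a "f a"] Tf[of 0] a(1) by (simp add: algebra_simps abs_le_iff)
  have \<eta>: "0 < \<eta>" "\<eta> \<le> 1 / 100" "18 * \<eta> \<le> (exp (- p))\<^sup>2"
    using exp_minus_4p_minus_1_bounds[OF p] unfolding \<eta>_def by auto
  have "(1 - \<eta>)\<^sup>2 \<le> (a / b * exp (1 - a / b)) powr (p - 1)"
    by (intro ratio_bound_of_exp_bounds[OF _ a(1) b(1) _ b(2) _ _ gf fg] Tf Tg) (use a b p \<eta> in auto)
  moreover have "1 - 2 * \<eta> \<le> (1 - \<eta>)\<^sup>2"
    using zero_le_power2[of \<eta>] by (simp add: power2_diff)
  moreover have "(a / b * exp (1 - a / b)) powr (p - 1) \<le> a / b * exp (1 - a / b)"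
    using a b p mult_exp_one_minus_le_one[of "a / b"] by (intro powr_le_one_le) auto
  ultimately have "(a / b - 1)\<^sup>2 \<le> 18 * \<eta>"
    using a b \<eta> by (intro sq_diff_one_le_if_mult_exp_ge) auto
  then have "\<bar>a / b - 1\<bar> \<le> exp (- p)"
    using \<eta>(3) abs_le_square_iff[of "a / b - 1" "exp (- p)"] by simp
  moreover have "a / b - 1 = (a - b) / b"
    using b(1) by (simp add: field_simps)
  then have "\<bar>a / b - 1\<bar> = \<bar>a - b\<bar> / b"
    using b(1) by (simp add: abs_divide)
  ultimately have "\<bar>a - b\<bar> \<le> exp (- p) * b"
    using b by (simp add: pos_divide_le_eq)
  then show ?thesis
    unfolding a_def b_def by (simp add: abs_le_iff algebra_simps)
qed

theorem lemma4p4: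
  fixes n :: nat and f g :: "real \<Rightarrow> real"
  assumes "n \<ge> 2"
    and "continuous_on {0..} f" and "continuous_on {0..} g"
    and "\<forall>t\<ge>0. f t \<ge> 0" and "\<forall>t\<ge>0. g t \<ge> 0"
    and "log_concave_on_nonneg f" and "log_concave_on_nonneg g"
    and "C2_on_pos f" and "C2_on_pos g"
    and "f 0 > 0" and "g 0 > 0"
    and "f integrable_on {0..}" and "g integrable_on {0..}"
    and "\<forall>t\<ge>0. \<bar>f t - g t\<bar> \<le> exp (- 5 * real n) * min (f 0) (g 0)"
  shows "(1 - exp (- real n)) * t_p (real n) g \<le> t_p (real n) f
         \<and> t_p (real n) f \<le> (1 + exp (- real n)) * t_p (real n) g"
  using t_p_stable[of "real n" f g] assms by simp

end
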